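(* Let $G=(V,E)$ be a finite directed acyclic graph with $V=\{v_1,\dots,v_n\}$, $G'=(V,E')$ its minimum equivalent graph, and $B$ the associated bipartite graph. For every matching $m$ of $B$, $\mathrm{min}_{sync}(G',\Phi(m))=|E'|-|m|$.
   Context: A path from $u$ to $v$ in a directed graph is a nonempty sequence of edges $(u,w_1),\dots,(w_k,v)$ of that graph. The minimum equivalent graph (MEG) of a finite DAG $G=(V,E)$ is the subgraph $G'=(V,E')$, $E'\subseteq E$, with the same vertex set and the smallest number of edges among subgraphs having the same reachability relation as $G$. The bipartite graph $B=(V_1,V_2,E_B)$ has $V_1=\{x_1,\dots,x_n\}$, $V_2=\{y_1,\dots,y_n\}$ and $E_B=\{(x_i,y_j) : (v_i,v_j)\in E'\}$; a matching is a set of edges of $E_B$ no two sharing an endpoint. Let $S=\{s_1,\dots,s_n\}$ be a set of streams; a stream assignment is a function $V\to S$, considered up to permutation of $S$. For a matching $m$, $\Phi(m)$ is the stream assignment obtained by starting from the partition $\{\{v_1\},\dots,\{v_n\}\}$, merging, for each $(x_i,y_j)\in m$, the blocks containing $v_i$ and $v_j$, and assigning two vertices the same stream iff they lie in the same block. A synchronization plan $\Lambda\subseteq E'$ is safe for a stream assignment $f$ on $G'$ if for every edge $(u,v)\in E'$, either $f(u)=f(v)$ or there is a path $P\subseteq E'$ from $u$ to $v$ with $P\cap\Lambda\neq\emptyset$; $\mathrm{min}_{sync}(G',f)=\min\{|\Lambda| : \Lambda\subseteq E' \text{ safe for } f \text{ on } G'\}$. *)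

theory Defs
  imports Main
begin

definition is_dag :: "'a set \<Rightarrow> ('a \<times> 'a) set \<Rightarrow> bool" where
  "is_dag V E \<longleftrightarrow> finite V \<and> E \<subseteq> V \<times> V \<and> acyclic E"

(* Reachability relation (paths are nonempty) = transitive closure. *)
definition is_MEG :: "('a \<times> 'a) set \<Rightarrow> ('a \<times> 'a) set \<Rightarrow> bool" where
  "is_MEG E E' \<longleftrightarrow> E' \<subseteq> E \<and> E'\<^sup>+ = E\<^sup>+ \<and>
     (\<forall>F. F \<subseteq> E \<and> F\<^sup>+ = E\<^sup>+ \<longrightarrow> card E' \<le> card F)"

definition is_path :: "('a \<times> 'a) set \<Rightarrow> 'a \<Rightarrow> 'a \<Rightarrow> ('a \<times> 'a) list \<Rightarrow> bool" where
  "is_path F u v P \<longleftrightarrow> P \<noteq> [] \<and> set P \<subseteq> F \<and> fst (hd P) = u \<and> snd (last P) = v \<and>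
     (\<forall>i. Suc i < length P \<longrightarrow> snd (P ! i) = fst (P ! Suc i))"

(* Bipartite graph B: x_i = Inl v_i, y_j = Inr v_j. *)
definition bip_edges :: "('a \<times> 'a) set \<Rightarrow> ('a + 'a) rel" where
  "bip_edges E' = {(Inl u, Inr v) | u v. (u, v) \<in> E'}"

definition is_matching :: "('b \<times> 'b) set \<Rightarrow> ('b \<times> 'b) set \<Rightarrow> bool" where
  "is_matching EB m \<longleftrightarrow> m \<subseteq> EB \<and>
     (\<forall>e\<in>m. \<forall>e'\<in>m. e \<noteq> e' \<longrightarrow>
        {fst e, snd e} \<inter> {fst e', snd e'} = {})"

(* Phi(m): the stream of v is (represented by) its block in the partition of V obtained
   by merging v_i and v_j for each (x_i, y_j) in m. Stream assignments are only relevant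
   up to permutation of streams, so naming each stream by its block is faithful. *)
definition Phi :: "'a set \<Rightarrow> ('a + 'a) rel \<Rightarrow> 'a \<Rightarrow> 'a set" where
  "Phi V m v = (let R = {(u, w). (Inl u, Inr w) \<in> m} in
                 {w \<in> V. (v, w) \<in> (R \<union> R\<inverse>)\<^sup>*})"

definition safe_plan :: "('a \<times> 'a) set \<Rightarrow> ('a \<Rightarrow> 's) \<Rightarrow> ('a \<times> 'a) set \<Rightarrow> bool" where
  "safe_plan E' f \<Lambda> \<longleftrightarrow> \<Lambda> \<subseteq> E' \<and>
     (\<forall>(u, v)\<in>E'. f u = f v \<or> (\<exists>P. is_path E' u v P \<and> set P \<inter> \<Lambda> \<noteq> {}))"

definition min_sync :: "('a \<times> 'a) set \<Rightarrow> ('a \<Rightarrow> 's) \<Rightarrow> nat" where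
  "min_sync E' f = Min {card \<Lambda> | \<Lambda>. safe_plan E' f \<Lambda>}"

end

theory Submission
  imports Defs
begin

text \<open>
  In a minimum equivalent graph of a DAG no edge is implied by the others, so by acyclicity the
  only path from u to v along an edge (u, v) is that edge itself. Hence a synchronization plan is
  safe exactly when it contains every edge whose endpoints lie in different streams, and the
  minimum is the number of such edges. A matching of B is a partial injection inside E', so its
  blocks are chains; an edge (u, v) of E' lies inside a block only if u reaches v along the chain,
  which again must be the edge itself. Thus the edges within streams are exactly the |m| matched
  ones.
\<close>

lemma is_path_Cons:
  "is_path F u v (e # P) \<longleftrightarrow>
     e \<in> F \<and> fst e = u \<and> (if P = [] then snd e = v else is_path F (snd e) v P)"
  by (cases P) (auto simp: is_path_def nth_Cons split: nat.splits)

lemma is_path_trancl: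
  assumes "is_path F u v P" shows "(u, v) \<in> F\<^sup>+"
  using assms
proof (induction P arbitrary: u)
  case Nil then show ?case by (simp add: is_path_def)
next
  case (Cons e P)
  then show ?case
    by (cases e) (auto simp: is_path_Cons split: if_splits intro: trancl_into_trancl2)
qed

lemma is_path_edge_rtrancl:
  assumes "is_path F u v P" and "(a, b) \<in> set P"
  shows "(u, a) \<in> F\<^sup>* \<and> (b, v) \<in> F\<^sup>*"
  using assms
proof (induction P arbitrary: u)
  case Nil then show ?case by simp
next
  case (Cons e P)
  then show ?case
    by (cases e) (auto simp: is_path_Cons split: if_splits
                    dest: is_path_trancl intro: converse_rtrancl_into_rtrancl)
qed

lemma is_MEG_irredundant_edge:
  assumes meg: "is_MEG E E'" and "finite E" and e: "e \<in> E'"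
  shows "e \<notin> (E' - {e})\<^sup>+"
proof
  assume "e \<in> (E' - {e})\<^sup>+"
  then have "E' \<subseteq> (E' - {e})\<^sup>+" by auto
  then have "E'\<^sup>+ \<subseteq> (E' - {e})\<^sup>+"
    by (metis trancl_id trancl_mono_subset trans_trancl)
  moreover have "(E' - {e})\<^sup>+ \<subseteq> E'\<^sup>+" by (simp add: trancl_mono_subset)
  ultimately have "(E' - {e})\<^sup>+ = E\<^sup>+" using meg by (auto simp: is_MEG_def)
  with meg have "card E' \<le> card (E' - {e})" unfolding is_MEG_def by blast
  moreover have "finite E'" using meg \<open>finite E\<close> finite_subset by (auto simp: is_MEG_def)
  ultimately show False using e by (meson card_Diff1_less leD)
qed

lemma irredundant_edge_unique_route:
  assumes "acyclic F" and uv: "(u, v) \<in> F" and irred: "(u, v) \<notin> (F - {(u, v)})\<^sup>+"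
    and ua: "(u, a) \<in> F\<^sup>*" and ab: "(a, b) \<in> F" and bv: "(b, v) \<in> F\<^sup>*"
  shows "(a, b) = (u, v)"
proof (rule ccontr)
  assume ne: "(a, b) \<noteq> (u, v)"
  define r where "r = F - {(u, v)}"
  have F_eq: "F = insert (u, v) r" and "r \<subseteq> F" using uv by (auto simp: r_def)
  then have r_rtrancl: "r\<^sup>* \<subseteq> F\<^sup>*" by (simp add: rtrancl_mono)
  have no_cycle: "(x, x) \<notin> F\<^sup>+" for x using \<open>acyclic F\<close> by (simp add: acyclic_def)
  have "(v, a) \<notin> r\<^sup>*"
  proof
    assume "(v, a) \<in> r\<^sup>*"
    with r_rtrancl ab have "(v, b) \<in> F\<^sup>+" by (auto intro: rtrancl_into_trancl1)
    with bv no_cycle show False by (meson trancl_rtrancl_trancl)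
  qed
  with ua have ua': "(u, a) \<in> r\<^sup>*" unfolding F_eq rtrancl_insert by auto
  have "(b, u) \<notin> r\<^sup>*"
  proof
    assume "(b, u) \<in> r\<^sup>*"
    moreover from ua ab have "(u, b) \<in> F\<^sup>+" by (rule rtrancl_into_trancl1)
    ultimately show False using r_rtrancl no_cycle by (meson subsetD trancl_rtrancl_trancl)
  qed
  with bv have "(b, v) \<in> r\<^sup>*" unfolding F_eq rtrancl_insert by auto
  moreover from ua' ab ne have "(u, b) \<in> r\<^sup>+" by (auto simp: r_def intro: rtrancl_into_trancl1)
  ultimately show False using irred unfolding r_def by (meson trancl_rtrancl_trancl)
qed

lemma is_path_single_edge:
  assumes "acyclic F" and irred: "\<And>e. e \<in> F \<Longrightarrow> e \<notin> (F - {e})\<^sup>+"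
    and "(u, v) \<in> F" and P: "is_path F u v P"
  shows "set P = {(u, v)}"
proof -
  have on_path: "(a, b) = (u, v)" if ab: "(a, b) \<in> set P" for a b
  proof (rule irredundant_edge_unique_route[OF \<open>acyclic F\<close> \<open>(u, v) \<in> F\<close> irred])
    show "(a, b) \<in> F" using ab P by (auto simp: is_path_def)
    show "(u, a) \<in> F\<^sup>*" "(b, v) \<in> F\<^sup>*" using is_path_edge_rtrancl[OF P ab] by auto
  qed (fact \<open>(u, v) \<in> F\<close>)
  then have "set P \<subseteq> {(u, v)}" by auto
  moreover have "set P \<noteq> {}" using P by (simp add: is_path_def)
  ultimately show ?thesis by (simp add: subset_singleton_iff)
qed

lemma safe_plan_iff_separating_edges:
  assumes "acyclic F" and "\<And>e. e \<in> F \<Longrightarrow> e \<notin> (F - {e})\<^sup>+"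
  shows "safe_plan F f \<Lambda> \<longleftrightarrow> {(u, v) \<in> F. f u \<noteq> f v} \<subseteq> \<Lambda> \<and> \<Lambda> \<subseteq> F"
proof
  assume safe: "safe_plan F f \<Lambda>"
  have "(u, v) \<in> \<Lambda>" if "(u, v) \<in> F" "f u \<noteq> f v" for u v
  proof -
    from safe have "\<forall>(u, v) \<in> F. f u = f v \<or> (\<exists>P. is_path F u v P \<and> set P \<inter> \<Lambda> \<noteq> {})"
      by (simp add: safe_plan_def)
    from bspec[OF this \<open>(u, v) \<in> F\<close>] \<open>f u \<noteq> f v\<close>
    obtain P where "is_path F u v P" "set P \<inter> \<Lambda> \<noteq> {}" by auto
    with is_path_single_edge[OF assms \<open>(u, v) \<in> F\<close>] show ?thesis by auto
  qed
  with safe show "{(u, v) \<in> F. f u \<noteq> f v} \<subseteq> \<Lambda> \<and> \<Lambda> \<subseteq> F"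
    by (auto simp: safe_plan_def)
next
  assume sep: "{(u, v) \<in> F. f u \<noteq> f v} \<subseteq> \<Lambda> \<and> \<Lambda> \<subseteq> F"
  show "safe_plan F f \<Lambda>"
    unfolding safe_plan_def
  proof (intro conjI ballI)
    show "\<Lambda> \<subseteq> F" using sep by simp
    fix e assume "e \<in> F"
    show "case e of (u, v) \<Rightarrow> f u = f v \<or> (\<exists>P. is_path F u v P \<and> set P \<inter> \<Lambda> \<noteq> {})"
    proof (cases e)
      case (Pair u v)
      with \<open>e \<in> F\<close> sep have "f u \<noteq> f v \<Longrightarrow> is_path F u v [e] \<and> set [e] \<inter> \<Lambda> \<noteq> {}"
        by (auto simp: is_path_def)
      with Pair show ?thesis by auto
    qed
  qed
qed

lemma min_sync_eq_card_separating_edges: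
  assumes "finite F" and "acyclic F" and "\<And>e. e \<in> F \<Longrightarrow> e \<notin> (F - {e})\<^sup>+"
  shows "min_sync F f = card {(u, v) \<in> F. f u \<noteq> f v}"
proof -
  define D where "D = {(u, v) \<in> F. f u \<noteq> f v}"
  have plans: "{card \<Lambda> |\<Lambda>. safe_plan F f \<Lambda>} = card ` {\<Lambda>. D \<subseteq> \<Lambda> \<and> \<Lambda> \<subseteq> F}"
    by (auto simp: safe_plan_iff_separating_edges[OF assms(2,3)] D_def)
  have "Min (card ` {\<Lambda>. D \<subseteq> \<Lambda> \<and> \<Lambda> \<subseteq> F}) = card D"
  proof (rule Min_eqI)
    have "{\<Lambda>. D \<subseteq> \<Lambda> \<and> \<Lambda> \<subseteq> F} \<subseteq> Pow F" by auto
    then show "finite (card ` {\<Lambda>. D \<subseteq> \<Lambda> \<and> \<Lambda> \<subseteq> F})"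
      using \<open>finite F\<close> by (meson finite_Pow_iff finite_imageI finite_subset)
    show "card D \<le> y" if "y \<in> card ` {\<Lambda>. D \<subseteq> \<Lambda> \<and> \<Lambda> \<subseteq> F}" for y
      using that \<open>finite F\<close> by (auto intro: card_mono dest: rev_finite_subset)
    show "card D \<in> card ` {\<Lambda>. D \<subseteq> \<Lambda> \<and> \<Lambda> \<subseteq> F}" by (auto simp: D_def)
  qed
  then show ?thesis unfolding min_sync_def plans D_def .
qed

lemma rtrancl_symcl_single_valued:
  assumes sv: "single_valued R" and sv_conv: "single_valued (R\<inverse>)"
    and "(x, y) \<in> (R \<union> R\<inverse>)\<^sup>*"
  shows "(x, y) \<in> R\<^sup>* \<or> (y, x) \<in> R\<^sup>*"
  using \<open>(x, y) \<in> (R \<union> R\<inverse>)\<^sup>*\<close>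
proof (induction rule: rtrancl_induct)
  case base
  then show ?case by simp
next
  case (step y z)
  from step.hyps(2) show ?case
  proof
    assume yz: "(y, z) \<in> R"
    from step.IH show ?case
    proof
      assume "(y, x) \<in> R\<^sup>*"
      with single_valued_confluent[OF sv] yz show ?case by blast
    qed (use yz in auto)
  next
    assume "(y, z) \<in> R\<inverse>"
    from step.IH show ?case
    proof
      assume "(x, y) \<in> R\<^sup>*"
      then have "(y, x) \<in> (R\<inverse>)\<^sup>*" by (simp add: rtrancl_converse)
      with single_valued_confluent[OF sv_conv] \<open>(y, z) \<in> R\<inverse>\<close>
      show ?case by (auto simp: rtrancl_converse)
    qed (use \<open>(y, z) \<in> R\<inverse>\<close> in \<open>auto intro: converse_rtrancl_into_rtrancl\<close>)
  qed
qed

lemma irredundant_edge_in_component_iff: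
  assumes "acyclic F" and irred: "(u, v) \<notin> (F - {(u, v)})\<^sup>+" and "(u, v) \<in> F"
    and "M \<subseteq> F" and "single_valued M" and "single_valued (M\<inverse>)"
  shows "(u, v) \<in> (M \<union> M\<inverse>)\<^sup>* \<longleftrightarrow> (u, v) \<in> M"
proof
  assume "(u, v) \<in> (M \<union> M\<inverse>)\<^sup>*"
  then have "(u, v) \<in> M\<^sup>* \<or> (v, u) \<in> M\<^sup>*"
    using assms(5,6) by (rule rtrancl_symcl_single_valued[rotated 2])
  moreover have "(v, u) \<notin> M\<^sup>*"
  proof
    assume "(v, u) \<in> M\<^sup>*"
    then have "(v, u) \<in> F\<^sup>*" using \<open>M \<subseteq> F\<close> rtrancl_mono by blast
    with \<open>(u, v) \<in> F\<close> have "(u, u) \<in> F\<^sup>+" by (rule rtrancl_into_trancl2)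
    with \<open>acyclic F\<close> show False by (simp add: acyclic_def)
  qed
  moreover have "u \<noteq> v" using \<open>acyclic F\<close> \<open>(u, v) \<in> F\<close> by (auto simp: acyclic_def)
  ultimately have "(u, v) \<in> M\<^sup>+" by (simp add: rtrancl_eq_or_trancl)
  show "(u, v) \<in> M"
  proof (rule ccontr)
    assume "(u, v) \<notin> M"
    with \<open>M \<subseteq> F\<close> have "M\<^sup>+ \<subseteq> (F - {(u, v)})\<^sup>+" by (intro trancl_mono_subset) auto
    with \<open>(u, v) \<in> M\<^sup>+\<close> irred show False by auto
  qed
qed auto

definition matched_rel :: "('a + 'a) rel \<Rightarrow> 'a rel" where
  "matched_rel m = {(u, w). (Inl u, Inr w) \<in> m}"

lemma Phi_matched_rel: "Phi V m v = {w \<in> V. (v, w) \<in> (matched_rel m \<union> (matched_rel m)\<inverse>)\<^sup>*}"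
  by (simp add: Phi_def matched_rel_def Let_def)

lemma Phi_eq_iff:
  assumes "u \<in> V"
  shows "Phi V m u = Phi V m v \<longleftrightarrow> (u, v) \<in> (matched_rel m \<union> (matched_rel m)\<inverse>)\<^sup>*"
proof -
  let ?S = "matched_rel m \<union> (matched_rel m)\<inverse>"
  have symm: "(x, y) \<in> ?S\<^sup>* \<longleftrightarrow> (y, x) \<in> ?S\<^sup>*" for x y
    by (metis converse_Un converse_converse rtrancl_converseD rtrancl_converseI sup_commute)
  show ?thesis
  proof
    assume "Phi V m u = Phi V m v"
    with \<open>u \<in> V\<close> have "(v, u) \<in> ?S\<^sup>*" by (auto simp: Phi_matched_rel)
    then show "(u, v) \<in> ?S\<^sup>*" using symm by blast
  next
    assume "(u, v) \<in> ?S\<^sup>*"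
    then have "(u, w) \<in> ?S\<^sup>* \<longleftrightarrow> (v, w) \<in> ?S\<^sup>*" for w
      using symm by (meson rtrancl_trans)
    then show "Phi V m u = Phi V m v" by (simp add: Phi_matched_rel)
  qed
qed

lemma matched_rel_subset: "m \<subseteq> bip_edges F \<Longrightarrow> matched_rel m \<subseteq> F"
  by (auto simp: matched_rel_def bip_edges_def)

lemma card_matched_rel:
  assumes "m \<subseteq> bip_edges F"
  shows "card (matched_rel m) = card m"
proof -
  have "m = (\<lambda>(u, w). (Inl u, Inr w)) ` matched_rel m"
    using assms by (force simp: matched_rel_def bip_edges_def)
  moreover have "inj_on (\<lambda>(u, w). (Inl u :: 'a + 'a, Inr w :: 'a + 'a)) (matched_rel m)"
    by (auto simp: inj_on_def)
  ultimately show ?thesis by (metis card_image)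
qed

lemma is_matching_single_valued:
  assumes "is_matching EB m"
  shows "single_valued (matched_rel m)" and "single_valued ((matched_rel m)\<inverse>)"
  using assms unfolding is_matching_def single_valued_def matched_rel_def
  by (fastforce dest: bspec)+

theorem theorem3:
  fixes V :: "'a set" and E E' :: "('a \<times> 'a) set" and m :: "('a + 'a) rel"
  assumes "is_dag V E"
    and "is_MEG E E'"
    and "is_matching (bip_edges E') m"
  shows "min_sync E' (Phi V m) = card E' - card m"
proof -
  let ?M = "matched_rel m"
  from assms(1) have "finite V" "E \<subseteq> V \<times> V" "acyclic E" by (simp_all add: is_dag_def)
  then have "finite E" by (meson finite_SigmaI finite_subset)
  from assms(2) have "E' \<subseteq> E" by (simp add: is_MEG_def)
  with \<open>finite E\<close> \<open>E \<subseteq> V \<times> V\<close> \<open>acyclic E\<close> have E': "finite E'" "E' \<subseteq> V \<times> V" "acyclic E'"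
    by (blast intro: finite_subset, blast, blast intro: acyclic_subset)
  have irred: "\<And>e. e \<in> E' \<Longrightarrow> e \<notin> (E' - {e})\<^sup>+"
    using is_MEG_irredundant_edge[OF assms(2) \<open>finite E\<close>] .
  have m: "m \<subseteq> bip_edges E'" using assms(3) by (simp add: is_matching_def)
  have "Phi V m u = Phi V m v \<longleftrightarrow> (u, v) \<in> ?M" if "(u, v) \<in> E'" for u v
  proof -
    have "u \<in> V" using that E'(2) by auto
    show ?thesis
      unfolding Phi_eq_iff[OF \<open>u \<in> V\<close>]
      by (rule irredundant_edge_in_component_iff[OF E'(3) irred[OF that] that
            matched_rel_subset[OF m] is_matching_single_valued[OF assms(3)]])
  qed
  then have "{(u, v) \<in> E'. Phi V m u \<noteq> Phi V m v} = E' - ?M" by auto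
  then have "min_sync E' (Phi V m) = card (E' - ?M)"
    by (simp only: min_sync_eq_card_separating_edges[OF E'(1,3) irred])
  also have "\<dots> = card E' - card m"
    using E'(1) matched_rel_subset[OF m] card_matched_rel[OF m]
    by (metis card_Diff_subset finite_subset)
  finally show ?thesis .
qed

end
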